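(* Let $\sigma\ge2$ and let $(v_\circ,\mathcal V,\mathcal E)$ be a rooted connected Toom graph with $\sigma$ charges that is not the trivial Toom graph; let $N:=|V|-1$ and $M:=|\mathcal E|$. Then there exist a unique bijection $\eta:V\to\{0,\dots,N\}$ and incomplete Toom graphs $(\mathcal V'(e),\mathcal E'(e))_{0\le e\le M}$ such that, writing $(\mathcal V(e),\mathcal E(e))$ for the typed directed graph obtained from $(\mathcal V'(e),\mathcal E'(e))$ by relabelling each vertex $u$ as $\eta^{-1}(u)$: (i) $\eta(v_\circ)=0$; (ii) $(\mathcal V'(0),\mathcal E'(0))$ is the trivial incomplete Toom graph and $(\mathcal V(M),\mathcal E(M))=(\mathcal V,\mathcal E)$; (iii) for every $0<e\le M$, $(\mathcal V'(e),\mathcal E'(e))$ is an extension of $(\mathcal V'(e-1),\mathcal E'(e-1))$ at its most urgent loose end.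
   Context: A typed directed graph with vertex set $V$, vertex types $A$, edge types $B$ is a pair $(\mathcal V,\mathcal E)$, $\mathcal V\subset V\times A$, $\mathcal E\subset V\times V\times B$ (an element $(v,w,b)$ is a directed edge from $v$ to $w$ of type $b$), with every vertex having at least one type; $V_a$, $\vec E_b$, $\vec E_{b,\rm in}(v)$, $\vec E_{b,\rm out}(v)$ as usual; connected means the underlying undirected graph is connected. A Toom graph with $\sigma$ charges: vertex types $\{\circ,\ast,1,\dots,\sigma\}$, edge types $\{1,\dots,\sigma\}$, with (i) $v\in V_\circ$: no incoming edges and $|\vec E_{1,\rm out}(v)|=\dots=|\vec E_{\sigma,\rm out}(v)|\le1$; (ii) $v\in V_\ast$: no outgoing edges and $|\vec E_{1,\rm in}(v)|=\dots=|\vec E_{\sigma,\rm in}(v)|\le1$; (iii) $v\in V_s$: exactly one incoming and one outgoing edge of charge $s$ and none of other charges. A rooted Toom graph is a triple $(v_\circ,\mathcal V,\mathcal E)$ with $v_\circ\in V_\circ$. The trivial Toom graph: $V_\circ=V_\ast=\{0\}$, no other vertices, no edges. An incomplete Toom graph with $\sigma\ge2$ charges: connected typed directed graph with these type sets, vertex set $\{0,\dots,N\}$, $0\in V_\circ$, such that (i) $v\in V_\circ$: no incoming edges, at most one outgoing edge of each charge; (ii) $v\in V_\ast$: no outgoing edges, at most one incoming of each charge; (iii) $v\in V_s$: at most one incoming and at most one outgoing edge of charge $s$, none of other charges; and either it is the trivial Toom graph or (iv) every $v\in(V_\sigma\cup V_\circ)\setminus\{0\}$ has exactly one outgoing edge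 of charge $\sigma$; (v) every $v\in V_s$ with $1\le s<\sigma$ has exactly one incoming edge of charge $s$; (vi) every $v\in V_\ast$ has an incoming edge of some charge $1\le s<\sigma$. The trivial incomplete Toom graph has $V=V_\circ=\{0\}$, $V_\ast=\emptyset$, $V_s=\emptyset$, no edges. A loose end is a pair $(v,s)$ with either $v\in V_\circ\cup V_s$, $1\le s<\sigma$, and no outgoing edge of charge $s$ at $v$; or $v\in V_\ast\cup V_\sigma$, $s=\sigma$, and no incoming edge of charge $\sigma$ at $v$. The most urgent loose end is the one with the smallest charge $s$ and, among those, the smallest vertex $v$. An extension of an incomplete Toom graph $(\mathcal V,\mathcal E)$ at a loose end $(v,s)$ is an incomplete Toom graph $(\mathcal V',\mathcal E')$ with $\mathcal V\subset\mathcal V'$, $\mathcal E\subset\mathcal E'$ and $\mathcal E'\setminus\mathcal E$ a single element, of the form $(v,w,s)$ if $s<\sigma$ and $(w,v,\sigma)$ if $s=\sigma$. *)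

theory Defs
  imports Main
begin

text \<open>Vertex types: Circ = source type, Star = sink type, Chg s = charge s (1 \<le> s \<le> sigma).
  Edge types are charges, represented as natural numbers in {1..sigma}.\<close>
datatype vty = Circ | Star | Chg nat

definition vtypes :: "nat \<Rightarrow> vty set" where
  "vtypes \<sigma> = {Circ, Star} \<union> Chg ` {1..\<sigma>}"

definition typed_digraph ::
  "'v set \<Rightarrow> 'a set \<Rightarrow> 'b set \<Rightarrow> ('v \<times> 'a) set \<Rightarrow> ('v \<times> 'v \<times> 'b) set \<Rightarrow> bool" where
  "typed_digraph V A B Vs Es \<longleftrightarrow>
     Vs \<subseteq> V \<times> A \<and> Es \<subseteq> V \<times> V \<times> B \<and> (\<forall>v\<in>V. \<exists>a. (v, a) \<in> Vs)"

definition Vty :: "('v \<times> 'a) set \<Rightarrow> 'a \<Rightarrow> 'v set" where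
  "Vty Vs a = {v. (v, a) \<in> Vs}"

definition Ein :: "('v \<times> 'v \<times> 'b) set \<Rightarrow> 'b \<Rightarrow> 'v \<Rightarrow> ('v \<times> 'v \<times> 'b) set" where
  "Ein Es b v = {e \<in> Es. \<exists>w. e = (w, v, b)}"

definition Eout :: "('v \<times> 'v \<times> 'b) set \<Rightarrow> 'b \<Rightarrow> 'v \<Rightarrow> ('v \<times> 'v \<times> 'b) set" where
  "Eout Es b v = {e \<in> Es. \<exists>w. e = (v, w, b)}"

definition graph_connected :: "'v set \<Rightarrow> ('v \<times> 'v \<times> 'b) set \<Rightarrow> bool" where
  "graph_connected V Es \<longleftrightarrow>
     (\<forall>v\<in>V. \<forall>w\<in>V. (v, w) \<in> {(x, y). \<exists>b. (x, y, b) \<in> Es \<or> (y, x, b) \<in> Es}\<^sup>*)"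

definition toom_graph ::
  "nat \<Rightarrow> 'v set \<Rightarrow> ('v \<times> vty) set \<Rightarrow> ('v \<times> 'v \<times> nat) set \<Rightarrow> bool" where
  "toom_graph \<sigma> V Vs Es \<longleftrightarrow>
     typed_digraph V (vtypes \<sigma>) {1..\<sigma>} Vs Es \<and>
     (\<forall>v\<in>Vty Vs Circ.
        (\<forall>s\<in>{1..\<sigma>}. Ein Es s v = {}) \<and>
        (\<forall>s\<in>{1..\<sigma>}. \<forall>t\<in>{1..\<sigma>}. card (Eout Es s v) = card (Eout Es t v)) \<and>
        (\<forall>s\<in>{1..\<sigma>}. card (Eout Es s v) \<le> 1)) \<and>
     (\<forall>v\<in>Vty Vs Star.
        (\<forall>s\<in>{1..\<sigma>}. Eout Es s v = {}) \<and>
        (\<forall>s\<in>{1..\<sigma>}. \<forall>t\<in>{1..\<sigma>}. card (Ein Es s v) = card (Ein Es t v)) \<and>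
        (\<forall>s\<in>{1..\<sigma>}. card (Ein Es s v) \<le> 1)) \<and>
     (\<forall>s\<in>{1..\<sigma>}. \<forall>v\<in>Vty Vs (Chg s).
        card (Ein Es s v) = 1 \<and> card (Eout Es s v) = 1 \<and>
        (\<forall>t\<in>{1..\<sigma>}. t \<noteq> s \<longrightarrow> Ein Es t v = {} \<and> Eout Es t v = {}))"

definition trivial_toom :: "('v \<times> vty) set \<Rightarrow> ('v \<times> 'v \<times> nat) set \<Rightarrow> bool" where
  "trivial_toom Vs Es \<longleftrightarrow> (\<exists>x. Vs = {(x, Circ), (x, Star)} \<and> Es = {})"

definition incomplete_toom ::
  "nat \<Rightarrow> (nat \<times> vty) set \<Rightarrow> (nat \<times> nat \<times> nat) set \<Rightarrow> bool" where
  "incomplete_toom \<sigma> Vs Es \<longleftrightarrow>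
    (\<exists>N. typed_digraph {0..N} (vtypes \<sigma>) {1..\<sigma>} Vs Es \<and> graph_connected {0..N} Es) \<and>
    (0, Circ) \<in> Vs \<and>
    (\<forall>v\<in>Vty Vs Circ.
        (\<forall>s\<in>{1..\<sigma>}. Ein Es s v = {}) \<and> (\<forall>s\<in>{1..\<sigma>}. card (Eout Es s v) \<le> 1)) \<and>
    (\<forall>v\<in>Vty Vs Star.
        (\<forall>s\<in>{1..\<sigma>}. Eout Es s v = {}) \<and> (\<forall>s\<in>{1..\<sigma>}. card (Ein Es s v) \<le> 1)) \<and>
    (\<forall>s\<in>{1..\<sigma>}. \<forall>v\<in>Vty Vs (Chg s).
        card (Ein Es s v) \<le> 1 \<and> card (Eout Es s v) \<le> 1 \<and>
        (\<forall>t\<in>{1..\<sigma>}. t \<noteq> s \<longrightarrow> Ein Es t v = {} \<and> Eout Es t v = {})) \<and>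
    (Vs = {(0, Circ), (0, Star)} \<and> Es = {} \<or>
      ((\<forall>v\<in>(Vty Vs (Chg \<sigma>) \<union> Vty Vs Circ) - {0}. card (Eout Es \<sigma> v) = 1) \<and>
       (\<forall>s\<in>{1..<\<sigma>}. \<forall>v\<in>Vty Vs (Chg s). card (Ein Es s v) = 1) \<and>
       (\<forall>v\<in>Vty Vs Star. \<exists>s\<in>{1..<\<sigma>}. Ein Es s v \<noteq> {})))"

definition trivial_incomplete_toom :: "(nat \<times> vty) set \<times> (nat \<times> nat \<times> nat) set" where
  "trivial_incomplete_toom = ({(0, Circ)}, {})"

definition loose_end ::
  "nat \<Rightarrow> (nat \<times> vty) set \<Rightarrow> (nat \<times> nat \<times> nat) set \<Rightarrow> nat \<times> nat \<Rightarrow> bool" where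
  "loose_end \<sigma> Vs Es vs \<longleftrightarrow> (case vs of (v, s) \<Rightarrow>
     (v \<in> Vty Vs Circ \<union> Vty Vs (Chg s) \<and> 1 \<le> s \<and> s < \<sigma> \<and> Eout Es s v = {}) \<or>
     (v \<in> Vty Vs Star \<union> Vty Vs (Chg \<sigma>) \<and> s = \<sigma> \<and> Ein Es \<sigma> v = {}))"

definition most_urgent_loose_end ::
  "nat \<Rightarrow> (nat \<times> vty) set \<Rightarrow> (nat \<times> nat \<times> nat) set \<Rightarrow> nat \<times> nat \<Rightarrow> bool" where
  "most_urgent_loose_end \<sigma> Vs Es vs \<longleftrightarrow> loose_end \<sigma> Vs Es vs \<and>
     (\<forall>v' s'. loose_end \<sigma> Vs Es (v', s') \<longrightarrow>
        snd vs < s' \<or> (snd vs = s' \<and> fst vs \<le> v'))"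

definition extension_at ::
  "nat \<Rightarrow> (nat \<times> vty) set \<times> (nat \<times> nat \<times> nat) set \<Rightarrow> nat \<times> nat
     \<Rightarrow> (nat \<times> vty) set \<times> (nat \<times> nat \<times> nat) set \<Rightarrow> bool" where
  "extension_at \<sigma> G vs G' \<longleftrightarrow> (case G of (Vs, Es) \<Rightarrow> case G' of (Vs', Es') \<Rightarrow> case vs of (v, s) \<Rightarrow>
     incomplete_toom \<sigma> Vs' Es' \<and> Vs \<subseteq> Vs' \<and> Es \<subseteq> Es' \<and>
     (\<exists>w. Es' - Es = {if s < \<sigma> then (v, w, s) else (w, v, \<sigma>)}))"

definition relabel :: "('u \<Rightarrow> 'v) \<Rightarrow> ('u \<times> 'a) set \<times> ('u \<times> 'u \<times> 'b) set
    \<Rightarrow> ('v \<times> 'a) set \<times> ('v \<times> 'v \<times> 'b) set" where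
  "relabel f G = ((\<lambda>(u, a). (f u, a)) ` fst G, (\<lambda>(u, w, b). (f u, f w, b)) ` snd G)"

end

(*
  Existence: explore the Toom graph from the root, repeatedly tying the most urgent loose end of
  the incomplete Toom graph built so far with the unique edge of the Toom graph that fits it, and
  label every vertex by the order of its discovery. The exploration only stops once all edges are
  found: if no loose end is left, the edges of charge 1 match every source with a distinct sink and
  the edges of charge sigma match every sink with a distinct source, so both matchings are perfect,
  every edge at an explored vertex has been found, and connectivity gives the whole graph.

  Uniqueness: the most urgent loose end depends only on the incomplete graph, a vertex of a Toom
  graph has at most one edge of each charge in each direction, and a newly discovered vertex gets
  the next free label; so two such sequences coincide step by step, and so do their labellings.
*)

theory Submission
  imports Defs
begin

definition adjacent :: "('v \<times> 'v \<times> 'b) set \<Rightarrow> ('v \<times> 'v) set" where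
  "adjacent E = {(x, y). \<exists>b. (x, y, b) \<in> E \<or> (y, x, b) \<in> E}"

lemma adjacent_iff: "(x, y) \<in> adjacent E \<longleftrightarrow> (\<exists>b. (x, y, b) \<in> E \<or> (y, x, b) \<in> E)"
  unfolding adjacent_def by simp

lemma graph_connected_iff_adjacent:
  "graph_connected V E \<longleftrightarrow> (\<forall>v\<in>V. \<forall>w\<in>V. (v, w) \<in> (adjacent E)\<^sup>*)"
  unfolding graph_connected_def adjacent_def by simp

lemma graph_connected_closed_subset:
  assumes "graph_connected V E" "a \<in> V" "a \<in> S"
    and closed: "\<And>x y. (x, y) \<in> adjacent E \<Longrightarrow> x \<in> S \<Longrightarrow> y \<in> S"
  shows "V \<subseteq> S"
proof
  fix w assume "w \<in> V"
  with assms(1,2) have "(a, w) \<in> (adjacent E)\<^sup>*"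
    unfolding graph_connected_iff_adjacent by blast
  then show "w \<in> S"
    using \<open>a \<in> S\<close> by (induction rule: rtrancl_induct) (auto intro: closed)
qed

lemma graph_connected_insert:
  assumes conn: "graph_connected A E" and "E \<subseteq> E'" "a \<in> A" "(a, x) \<in> adjacent E'"
  shows "graph_connected (insert x A) E'"
proof -
  let ?R = "(adjacent E')\<^sup>*"
  have sym: "(q, p) \<in> ?R" if "(p, q) \<in> ?R" for p q
  proof -
    have "sym (adjacent E')" unfolding adjacent_def sym_def by blast
    then show ?thesis using that by (meson sym_rtrancl symD)
  qed
  have "adjacent E \<subseteq> adjacent E'" using \<open>E \<subseteq> E'\<close> unfolding adjacent_def by blast
  then have "(a, p) \<in> ?R" if "p \<in> insert x A" for p
    using that conn \<open>a \<in> A\<close> \<open>(a, x) \<in> adjacent E'\<close> rtrancl_mono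
    unfolding graph_connected_iff_adjacent by blast
  then show ?thesis
    unfolding graph_connected_iff_adjacent by (meson sym rtrancl_trans)
qed

lemma card_Domain_eq_card_Range:
  assumes "\<And>x y y'. (x, y) \<in> R \<Longrightarrow> (x, y') \<in> R \<Longrightarrow> y = y'"
    and "\<And>x x' y. (x, y) \<in> R \<Longrightarrow> (x', y) \<in> R \<Longrightarrow> x = x'"
  shows "card (Domain R) = card (Range R)"
proof -
  have "inj_on fst R" "inj_on snd R"
    using assms by (auto intro!: inj_onI)
  then show ?thesis
    by (simp add: Domain_fst Range_snd card_image)
qed

lemma card_Domain_Range_balance:
  assumes "finite R"
    and "\<And>x y y'. (x, y) \<in> R \<Longrightarrow> (x, y') \<in> R \<Longrightarrow> y = y'"
    and "\<And>x x' y. (x, y) \<in> R \<Longrightarrow> (x', y) \<in> R \<Longrightarrow> x = x'"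
    and "Domain R = A \<union> K" "Range R = B \<union> K" "A \<inter> K = {}" "B \<inter> K = {}"
  shows "card A = card B"
proof -
  have fin: "finite (Domain R)" "finite (Range R)"
    using \<open>finite R\<close> by (simp_all add: Domain_fst Range_snd)
  have "card A + card K = card B + card K"
    using card_Domain_eq_card_Range[of R, OF assms(2,3)] fin assms(4-7)
    by (simp add: card_Un_disjoint)
  then show ?thesis by simp
qed

lemma new_label_unique:
  assumes "inj_on f {..<n}" "inj_on f' {..<n}" "w < n" "w' < n" "w \<le> Suc N" "w' \<le> Suc N"
    and "\<forall>u\<in>{0..N}. f u = f' u" "f w = f' w'"
  shows "w = w'"
proof -
  consider "w \<le> N" | "w' \<le> N" | "w = Suc N" "w' = Suc N"
    using assms(5,6) by linarith
  then show ?thesis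
  proof cases
    case 1
    then have "f' w = f' w'" using assms(7,8) by simp
    then show ?thesis using assms(2-4) by (simp add: inj_on_def)
  next
    case 2
    then have "f w = f w'" using assms(7,8) by simp
    then show ?thesis using assms(1,3,4) by (simp add: inj_on_def)
  qed simp
qed

lemma inv_into_eq_imp_eq_on:
  assumes "bij_betw f A B" "bij_betw g A B" "\<forall>y\<in>B. inv_into A f y = inv_into A g y"
  shows "\<forall>x\<in>A. f x = g x"
proof
  fix x assume "x \<in> A"
  then have "f x \<in> B" using assms(1) bij_betwE by blast
  then have "inv_into A g (f x) = x"
    using assms(3) bij_betw_inv_into_left[OF assms(1) \<open>x \<in> A\<close>] by simp
  then show "f x = g x"
    using bij_betw_inv_into_right[OF assms(2) \<open>f x \<in> B\<close>] by simp
qed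

section \<open>Extensions of incomplete Toom graphs\<close>

definition tying_edge :: "nat \<Rightarrow> nat \<Rightarrow> 'v \<Rightarrow> 'v \<Rightarrow> 'v \<times> 'v \<times> nat" where
  "tying_edge \<sigma> s v w = (if s < \<sigma> then (v, w, s) else (w, v, \<sigma>))"

lemma extension_at_iff:
  "extension_at \<sigma> (A, B) (v, s) (A', B') \<longleftrightarrow>
     incomplete_toom \<sigma> A' B' \<and> A \<subseteq> A' \<and> B \<subseteq> B' \<and> (\<exists>w. B' - B = {tying_edge \<sigma> s v w})"
  unfolding extension_at_def tying_edge_def by simp

lemma extension_at_mono: "extension_at \<sigma> G le G' \<Longrightarrow> fst G \<subseteq> fst G' \<and> snd G \<subseteq> snd G'"
  unfolding extension_at_def by (auto split: prod.splits)

lemma most_urgent_loose_end_exists: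
  assumes "loose_end \<sigma> A B le"
  shows "\<exists>le'. most_urgent_loose_end \<sigma> A B le'"
proof -
  define s where "s = (LEAST s. \<exists>v. loose_end \<sigma> A B (v, s))"
  define v where "v = (LEAST v. loose_end \<sigma> A B (v, s))"
  have "\<exists>s v. loose_end \<sigma> A B (v, s)"
    using assms by (cases le) blast
  then have "\<exists>v. loose_end \<sigma> A B (v, s)"
    unfolding s_def by (rule LeastI_ex)
  then have "loose_end \<sigma> A B (v, s)"
    unfolding v_def by (rule LeastI_ex)
  moreover have "s < s' \<or> (s = s' \<and> v \<le> v')" if "loose_end \<sigma> A B (v', s')" for v' s'
  proof -
    have "s \<le> s'"
      unfolding s_def using that by (blast intro: Least_le)
    moreover have "s = s' \<Longrightarrow> v \<le> v'"
      unfolding v_def using that by (blast intro: Least_le)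
    ultimately show ?thesis by linarith
  qed
  ultimately show ?thesis
    unfolding most_urgent_loose_end_def by auto
qed

lemma most_urgent_loose_end_unique:
  assumes "most_urgent_loose_end \<sigma> A B le" "most_urgent_loose_end \<sigma> A B le'"
  shows "le = le'"
  using assms unfolding most_urgent_loose_end_def
  by (metis antisym less_asym prod.collapse)

lemma incomplete_toom_interval:
  assumes "incomplete_toom \<sigma> A B"
  shows "\<exists>N. Domain A = {0..N} \<and> (\<forall>x y b. (x, y, b) \<in> B \<longrightarrow> x \<le> N \<and> y \<le> N) \<and>
    graph_connected {0..N} B"
proof -
  have "\<exists>N. typed_digraph {0..N} (vtypes \<sigma>) {1..\<sigma>} A B \<and> graph_connected {0..N} B"
    using assms unfolding incomplete_toom_def by (rule conjunct1)
  then obtain N where "typed_digraph {0..N} (vtypes \<sigma>) {1..\<sigma>} A B" "graph_connected {0..N} B"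
    by blast
  then show ?thesis
    by (intro exI[of _ N]) (auto simp: typed_digraph_def)
qed

text \<open>Connectivity of the extended graph leaves \<open>N + 1\<close> as the only possible new vertex.\<close>
lemma extension_at_shape:
  assumes inc: "incomplete_toom \<sigma> A B" and dom: "Domain A = {0..N}"
    and ext: "extension_at \<sigma> (A, B) (v, s) (A', B')" and "v \<in> Domain A"
  shows "\<exists>w. w \<le> Suc N \<and> B' = insert (tying_edge \<sigma> s v w) B \<and> Domain A' = insert w (Domain A)"
proof -
  obtain w where inc': "incomplete_toom \<sigma> A' B'" and "A \<subseteq> A'" "B \<subseteq> B'"
    and new: "B' - B = {tying_edge \<sigma> s v w}"
    using ext unfolding extension_at_iff by blast
  then have B': "B' = insert (tying_edge \<sigma> s v w) B" by blast
  obtain N' where dom': "Domain A' = {0..N'}" and B'_le: "\<And>x y b. (x, y, b) \<in> B' \<Longrightarrow> x \<le> N' \<and> y \<le> N'"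
    and conn': "graph_connected {0..N'} B'"
    using incomplete_toom_interval[OF inc'] by blast
  have B_le: "x \<le> N \<and> y \<le> N" if "(x, y, b) \<in> B" for x y b
    using incomplete_toom_interval[OF inc] that dom by (simp, blast)
  have "w \<le> N'"
    using B'_le[of v w s] B'_le[of w v \<sigma>] B' unfolding tying_edge_def by (auto split: if_splits)
  have sub: "{0..N'} \<subseteq> insert w {0..N}"
  proof (rule graph_connected_closed_subset[OF conn'])
    fix x y assume "(x, y) \<in> adjacent B'" "x \<in> insert w {0..N}"
    then show "y \<in> insert w {0..N}"
      using B' B_le \<open>v \<in> Domain A\<close> dom unfolding adjacent_iff tying_edge_def
      by (auto split: if_splits)
  qed auto
  have "Suc N \<in> {0..N'}" if "\<not> w \<le> Suc N"
    using that \<open>w \<le> N'\<close> by simp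
  with sub have "w \<le> Suc N" by fastforce
  moreover have "Domain A' = insert w (Domain A)"
    using sub \<open>w \<le> N'\<close> Domain_mono[OF \<open>A \<subseteq> A'\<close>] dom dom' by auto
  ultimately show ?thesis using B' by blast
qed

section \<open>Graphs indexed by a list of vertices\<close>

definition index_types :: "('v \<times> 'a) set \<Rightarrow> 'v list \<Rightarrow> (nat \<times> 'a) set" where
  "index_types W L = {(i, a). i < length L \<and> (L ! i, a) \<in> W}"

definition index_edges :: "'v list \<Rightarrow> ('v \<times> 'v \<times> 'b) set \<Rightarrow> (nat \<times> nat \<times> 'b) set" where
  "index_edges L F = {(i, j, b). i < length L \<and> j < length L \<and> (L ! i, L ! j, b) \<in> F}"

lemma mem_index_types [simp]: "(i, a) \<in> index_types W L \<longleftrightarrow> i < length L \<and> (L ! i, a) \<in> W"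
  unfolding index_types_def by simp

lemma Vty_index_types [simp]: "i \<in> Vty (index_types W L) a \<longleftrightarrow> i < length L \<and> (L ! i, a) \<in> W"
  unfolding Vty_def by simp

lemma mem_index_edges [simp]:
  "(i, j, b) \<in> index_edges L F \<longleftrightarrow> i < length L \<and> j < length L \<and> (L ! i, L ! j, b) \<in> F"
  unfolding index_edges_def by simp

lemma index_types_append: "index_types W L \<subseteq> index_types W (L @ ys)"
  by (auto simp: nth_append)

lemma index_edges_append:
  assumes "y \<notin> set L" "F \<subseteq> set L \<times> set L \<times> UNIV"
  shows "index_edges (L @ [y]) F = index_edges L F"
proof -
  have old: "i < length L \<and> (L @ [y]) ! i = L ! i" if "i < Suc (length L)" "(L @ [y]) ! i \<in> set L" for i
    using that assms(1) by (cases "i = length L") (auto simp: nth_append)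
  show ?thesis
  proof (rule set_eqI)
    fix e :: "nat \<times> nat \<times> 'b"
    obtain i j c where e: "e = (i, j, c)" by (cases e)
    show "e \<in> index_edges (L @ [y]) F \<longleftrightarrow> e \<in> index_edges L F"
      using old[of i] old[of j] assms(2)
      unfolding e by (auto simp: nth_append)
  qed
qed

lemma index_edges_insert:
  assumes "distinct L" "i < length L" "j < length L"
  shows "index_edges L (insert (L ! i, L ! j, b) F) = insert (i, j, b) (index_edges L F)"
  using assms nth_eq_iff_index_eq[OF assms(1)] unfolding index_edges_def by auto

lemma bij_betw_Eout_index_edges:
  assumes "distinct L" "i < length L" "F \<subseteq> set L \<times> set L \<times> UNIV"
  shows "bij_betw (\<lambda>(i, j, c). (L ! i, L ! j, c)) (Eout (index_edges L F) b i) (Eout F b (L ! i))"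
proof (rule bij_betw_imageI)
  show "inj_on (\<lambda>(i, j, c). (L ! i, L ! j, c)) (Eout (index_edges L F) b i)"
    using nth_eq_iff_index_eq[OF assms(1)] by (auto simp: Eout_def inj_on_def)
  show "(\<lambda>(i, j, c). (L ! i, L ! j, c)) ` Eout (index_edges L F) b i = Eout F b (L ! i)"
    using assms(2,3) by (fastforce simp: Eout_def image_iff in_set_conv_nth subset_iff)
qed

lemma bij_betw_Ein_index_edges:
  assumes "distinct L" "i < length L" "F \<subseteq> set L \<times> set L \<times> UNIV"
  shows "bij_betw (\<lambda>(j, i, c). (L ! j, L ! i, c)) (Ein (index_edges L F) b i) (Ein F b (L ! i))"
proof (rule bij_betw_imageI)
  show "inj_on (\<lambda>(j, i, c). (L ! j, L ! i, c)) (Ein (index_edges L F) b i)"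
    using nth_eq_iff_index_eq[OF assms(1)] by (auto simp: Ein_def inj_on_def)
  show "(\<lambda>(j, i, c). (L ! j, L ! i, c)) ` Ein (index_edges L F) b i = Ein F b (L ! i)"
    using assms(2,3) by (fastforce simp: Ein_def image_iff in_set_conv_nth subset_iff)
qed

lemma relabel_index_graph:
  assumes "Domain W \<subseteq> set L" "F \<subseteq> set L \<times> set L \<times> UNIV"
    and "\<And>i. i < length L \<Longrightarrow> f i = L ! i"
  shows "relabel f (index_types W L, index_edges L F) = (W, F)"
proof -
  have "(\<lambda>(u, a). (f u, a)) ` index_types W L = W"
  proof (rule set_eqI, rule iffI)
    fix p assume "p \<in> W"
    moreover obtain x a where "p = (x, a)" by fastforce
    moreover from calculation assms(1) have "x \<in> set L" by auto
    then obtain i where "i < length L" "L ! i = x" by (metis in_set_conv_nth)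
    ultimately show "p \<in> (\<lambda>(u, a). (f u, a)) ` index_types W L"
      using assms(3) by (auto intro!: image_eqI[of _ _ "(i, a)"])
  qed (use assms(3) in auto)
  moreover have "(\<lambda>(u, w, c). (f u, f w, c)) ` index_edges L F = F"
  proof (rule set_eqI, rule iffI)
    fix p assume "p \<in> F"
    moreover obtain x y c where "p = (x, y, c)" by (cases p)
    moreover from calculation assms(2) have "x \<in> set L" "y \<in> set L" by auto
    then obtain i j where "i < length L" "L ! i = x" "j < length L" "L ! j = y"
      by (metis in_set_conv_nth)
    ultimately show "p \<in> (\<lambda>(u, w, c). (f u, f w, c)) ` index_edges L F"
      using assms(3) by (auto intro!: image_eqI[of _ _ "(i, j, c)"])
  qed (use assms(3) in auto)
  ultimately show ?thesis
    unfolding relabel_def by simp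
qed

definition append_new :: "'a list \<Rightarrow> 'a \<Rightarrow> 'a list" where
  "append_new L y = (if y \<in> set L then L else L @ [y])"

lemma set_append_new: "set (append_new L y) = insert y (set L)"
  and distinct_append_new: "distinct L \<Longrightarrow> distinct (append_new L y)"
  and append_new_prefix: "\<exists>ys. append_new L y = L @ ys"
  unfolding append_new_def by auto

lemma index_edges_append_new:
  assumes "distinct L" "v < length L" "F \<subseteq> set L \<times> set L \<times> UNIV"
  shows "\<exists>j. j < length (append_new L y) \<and> append_new L y ! j = y \<and>
    {..<length (append_new L y)} = insert j {..<length L} \<and>
    index_edges (append_new L y) (insert (tying_edge \<sigma> s (L ! v) y) F)
       = insert (tying_edge \<sigma> s v j) (index_edges L F)"
proof (cases "y \<in> set L")
  case True
  then obtain j where "j < length L" "L ! j = y" by (auto simp: in_set_conv_nth)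
  with True assms show ?thesis
    by (intro exI[of _ j]) (auto simp: append_new_def tying_edge_def index_edges_insert)
next
  case False
  let ?L = "L @ [y]"
  have d: "distinct ?L" and v: "v < length ?L" and l: "length L < length ?L"
    using False assms(1,2) by auto
  have "index_edges ?L (insert (tying_edge \<sigma> s (?L ! v) (?L ! length L)) F)
      = insert (tying_edge \<sigma> s v (length L)) (index_edges ?L F)"
  proof (cases "s < \<sigma>")
    case True
    show ?thesis unfolding tying_edge_def if_P[OF True] by (rule index_edges_insert[OF d v l])
  next
    case False
    show ?thesis unfolding tying_edge_def if_not_P[OF False] by (rule index_edges_insert[OF d l v])
  qed
  moreover have "?L ! v = L ! v" "?L ! length L = y" using assms(2) by (auto simp: nth_append)
  ultimately have "index_edges ?L (insert (tying_edge \<sigma> s (L ! v) y) F)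
      = insert (tying_edge \<sigma> s v (length L)) (index_edges ?L F)"
    by simp
  with False assms(3) show ?thesis
    by (intro exI[of _ "length L"]) (auto simp: append_new_def index_edges_append nth_append)
qed

section \<open>Local structure of a rooted Toom graph\<close>

locale rooted_toom_graph =
  fixes \<sigma> :: nat and V :: "'v set" and v0 :: 'v
    and Vs :: "('v \<times> vty) set" and Es :: "('v \<times> 'v \<times> nat) set"
  assumes two_le_charges: "\<sigma> \<ge> 2"
    and finite_V: "finite V"
    and toom: "toom_graph \<sigma> V Vs Es"
    and root_Circ: "v0 \<in> Vty Vs Circ"
    and connected: "graph_connected V Es"
    and nontrivial: "\<not> trivial_toom Vs Es"
begin

lemma root_type: "(v0, Circ) \<in> Vs"
  using root_Circ unfolding Vty_def by simp

lemma type_range: "(x, a) \<in> Vs \<Longrightarrow> x \<in> V \<and> a \<in> vtypes \<sigma>"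
  and edge_range: "(x, y, b) \<in> Es \<Longrightarrow> x \<in> V \<and> y \<in> V \<and> b \<in> {1..\<sigma>}"
  and vertex_has_type: "x \<in> V \<Longrightarrow> \<exists>a. (x, a) \<in> Vs"
  using toom unfolding toom_graph_def typed_digraph_def by auto

lemma root_in_V: "v0 \<in> V"
  using type_range[OF root_type] by blast

lemma finite_Es: "finite Es"
  by (rule finite_subset[of _ "V \<times> V \<times> {1..\<sigma>}"]) (use edge_range finite_V in auto)

lemma Circ_degrees:
  "(x, Circ) \<in> Vs \<Longrightarrow> s \<in> {1..\<sigma>} \<Longrightarrow> t \<in> {1..\<sigma>} \<Longrightarrow>
     Ein Es s x = {} \<and> card (Eout Es s x) \<le> 1 \<and> card (Eout Es s x) = card (Eout Es t x)"
  using toom unfolding toom_graph_def Vty_def by blast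

lemma Star_degrees:
  "(x, Star) \<in> Vs \<Longrightarrow> s \<in> {1..\<sigma>} \<Longrightarrow> t \<in> {1..\<sigma>} \<Longrightarrow>
     Eout Es s x = {} \<and> card (Ein Es s x) \<le> 1 \<and> card (Ein Es s x) = card (Ein Es t x)"
  using toom unfolding toom_graph_def Vty_def by blast

lemma Chg_degrees:
  assumes "(x, Chg s) \<in> Vs"
  shows "card (Ein Es s x) = 1 \<and> card (Eout Es s x) = 1 \<and>
    (\<forall>t\<in>{1..\<sigma>}. t \<noteq> s \<longrightarrow> Ein Es t x = {} \<and> Eout Es t x = {})"
proof -
  have "s \<in> {1..\<sigma>}"
    using type_range[OF assms] unfolding vtypes_def by auto
  with assms toom show ?thesis
    unfolding toom_graph_def Vty_def by blast
qed

lemma Circ_no_in_edge: "(x, Circ) \<in> Vs \<Longrightarrow> (y, x, b) \<notin> Es"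
  using Circ_degrees[of x b b] edge_range unfolding Ein_def by blast

lemma Star_no_out_edge: "(x, Star) \<in> Vs \<Longrightarrow> (x, y, b) \<notin> Es"
  using Star_degrees[of x b b] edge_range unfolding Eout_def by blast

lemma Chg_in_edge_charge: "(x, Chg s) \<in> Vs \<Longrightarrow> (y, x, b) \<in> Es \<Longrightarrow> b = s"
  using Chg_degrees edge_range unfolding Ein_def by blast

lemma Chg_out_edge_charge: "(x, Chg s) \<in> Vs \<Longrightarrow> (x, y, b) \<in> Es \<Longrightarrow> b = s"
  using Chg_degrees edge_range unfolding Eout_def by blast

lemma Chg_in_edge_exists:
  assumes "(x, Chg s) \<in> Vs" shows "\<exists>y. (y, x, s) \<in> Es"
proof -
  have "Ein Es s x \<noteq> {}"
    using Chg_degrees[OF assms] by (metis card.empty zero_neq_one)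
  then show ?thesis unfolding Ein_def by auto
qed

lemma Chg_out_edge_exists:
  assumes "(x, Chg s) \<in> Vs" shows "\<exists>y. (x, y, s) \<in> Es"
proof -
  have "Eout Es s x \<noteq> {}"
    using Chg_degrees[OF assms] by (metis card.empty zero_neq_one)
  then show ?thesis unfolding Eout_def by auto
qed

lemma edge_source_type: "(x, y, b) \<in> Es \<Longrightarrow> (x, a) \<in> Vs \<Longrightarrow> a = Circ \<or> a = Chg b"
  using type_range[of x a] Star_no_out_edge Chg_out_edge_charge unfolding vtypes_def by blast

lemma edge_target_type: "(x, y, b) \<in> Es \<Longrightarrow> (y, a) \<in> Vs \<Longrightarrow> a = Star \<or> a = Chg b"
  using type_range[of y a] Circ_no_in_edge Chg_in_edge_charge unfolding vtypes_def by blast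

lemma card_Eout_le_1: "card (Eout Es b x) \<le> 1"
proof (cases "Eout Es b x = {}")
  case False
  then obtain y where e: "(x, y, b) \<in> Es" unfolding Eout_def by auto
  then obtain a where a: "(x, a) \<in> Vs" using edge_range vertex_has_type by blast
  with e have "a = Circ \<or> a = Chg b" by (rule edge_source_type)
  then show ?thesis
    using a Circ_degrees[of x b b] Chg_degrees[of x b] edge_range[OF e] by auto
qed simp

lemma card_Ein_le_1: "card (Ein Es b x) \<le> 1"
proof (cases "Ein Es b x = {}")
  case False
  then obtain y where e: "(y, x, b) \<in> Es" unfolding Ein_def by auto
  then obtain a where a: "(x, a) \<in> Vs" using edge_range vertex_has_type by blast
  with e have "a = Star \<or> a = Chg b" by (rule edge_target_type)
  then show ?thesis
    using a Star_degrees[of x b b] Chg_degrees[of x b] edge_range[OF e] by auto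
qed simp

lemma out_edge_unique: "(x, y, b) \<in> Es \<Longrightarrow> (x, y', b) \<in> Es \<Longrightarrow> y = y'"
  using card_Eout_le_1[of b x] finite_subset[OF _ finite_Es, of "Eout Es b x"]
  unfolding Eout_def by (auto simp: card_le_Suc0_iff_eq)

lemma in_edge_unique: "(y, x, b) \<in> Es \<Longrightarrow> (y', x, b) \<in> Es \<Longrightarrow> y = y'"
  using card_Ein_le_1[of b x] finite_subset[OF _ finite_Es, of "Ein Es b x"]
  unfolding Ein_def by (auto simp: card_le_Suc0_iff_eq)

lemma tying_edge_unique: "tying_edge \<sigma> s x y \<in> Es \<Longrightarrow> tying_edge \<sigma> s x y' \<in> Es \<Longrightarrow> y = y'"
  using out_edge_unique in_edge_unique unfolding tying_edge_def by (auto split: if_splits)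

lemma isolated_vertex_singleton:
  assumes "x \<in> V" "\<And>y b. (x, y, b) \<notin> Es \<and> (y, x, b) \<notin> Es"
  shows "V = {x}"
proof -
  have "V \<subseteq> {x}"
    using connected \<open>x \<in> V\<close> by (rule graph_connected_closed_subset) (use assms(2) in \<open>auto simp: adjacent_iff\<close>)
  with \<open>x \<in> V\<close> show ?thesis by blast
qed

lemma vertex_has_edge:
  assumes "Es \<noteq> {}" "x \<in> V"
  shows "\<exists>y b. (x, y, b) \<in> Es \<or> (y, x, b) \<in> Es"
proof (rule ccontr)
  assume isolated: "\<not> (\<exists>y b. (x, y, b) \<in> Es \<or> (y, x, b) \<in> Es)"
  then have "V = {x}" using isolated_vertex_singleton[OF \<open>x \<in> V\<close>] by blast
  moreover obtain y z b where "(y, z, b) \<in> Es" using \<open>Es \<noteq> {}\<close> by auto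
  ultimately show False using isolated edge_range by blast
qed

lemma Chg_type_unique: "(x, Chg s) \<in> Vs \<Longrightarrow> (x, a) \<in> Vs \<Longrightarrow> a = Chg s"
  using Chg_in_edge_exists[of x s] Chg_out_edge_exists[of x s] type_range[of x a]
    Circ_no_in_edge Star_no_out_edge Chg_in_edge_charge
  unfolding vtypes_def by blast

text \<open>A vertex that is both a source and a sink is isolated, so by connectivity it is the whole
  graph: the trivial Toom graph.\<close>
lemma not_Circ_and_Star: "(x, Circ) \<in> Vs \<Longrightarrow> (x, Star) \<in> Vs \<Longrightarrow> False"
proof -
  assume C: "(x, Circ) \<in> Vs" and S: "(x, Star) \<in> Vs"
  then have no_edge: "(x, y, b) \<notin> Es \<and> (y, x, b) \<notin> Es" for y b
    using Circ_no_in_edge Star_no_out_edge by blast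
  then have V: "V = {x}"
    using isolated_vertex_singleton type_range[OF C] by blast
  then have "Es = {}"
    using edge_range no_edge by fast
  moreover have "Vs = {(x, Circ), (x, Star)}"
  proof
    show "Vs \<subseteq> {(x, Circ), (x, Star)}"
    proof
      fix p assume "p \<in> Vs"
      moreover obtain y a where "p = (y, a)" by fastforce
      moreover have "(x, Chg s) \<notin> Vs" for s
        using Chg_type_unique[OF _ C] by blast
      ultimately show "p \<in> {(x, Circ), (x, Star)}"
        using V type_range[of y a] unfolding vtypes_def by auto
    qed
  qed (use C S in auto)
  ultimately show False
    using nontrivial unfolding trivial_toom_def by blast
qed

lemma vertex_type_unique: "(x, a) \<in> Vs \<Longrightarrow> (x, a') \<in> Vs \<Longrightarrow> a = a'"
  using type_range[of x a] type_range[of x a'] Chg_type_unique not_Circ_and_Star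
  unfolding vtypes_def by blast

lemma Circ_out_edge_exists:
  assumes "Es \<noteq> {}" "(x, Circ) \<in> Vs" "s \<in> {1..\<sigma>}"
  shows "\<exists>y. (x, y, s) \<in> Es"
proof -
  obtain y b where e: "(x, y, b) \<in> Es"
    using vertex_has_edge[OF assms(1)] type_range[OF assms(2)] Circ_no_in_edge[OF assms(2)] by blast
  then have "card (Eout Es b x) \<noteq> 0"
    using finite_subset[OF _ finite_Es, of "Eout Es b x"] unfolding Eout_def by auto
  then have "Eout Es s x \<noteq> {}"
    using Circ_degrees[OF assms(2) assms(3), of b] edge_range[OF e] by auto
  then show ?thesis unfolding Eout_def by auto
qed

lemma Star_in_edge_exists:
  assumes "Es \<noteq> {}" "(x, Star) \<in> Vs" "s \<in> {1..\<sigma>}"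
  shows "\<exists>y. (y, x, s) \<in> Es"
proof -
  obtain y b where e: "(y, x, b) \<in> Es"
    using vertex_has_edge[OF assms(1)] type_range[OF assms(2)] Star_no_out_edge[OF assms(2)] by blast
  then have "card (Ein Es b x) \<noteq> 0"
    using finite_subset[OF _ finite_Es, of "Ein Es b x"] unfolding Ein_def by auto
  then have "Ein Es s x \<noteq> {}"
    using Star_degrees[OF assms(2) assms(3), of b] edge_range[OF e] by auto
  then show ?thesis unfolding Ein_def by auto
qed

text \<open>Conditions (iv)--(vi) of an incomplete Toom graph and its loose ends, read off at a vertex
  of the Toom graph for a set \<open>F\<close> of edges found so far.\<close>
definition settled :: "('v \<times> 'v \<times> nat) set \<Rightarrow> 'v \<Rightarrow> bool" where
  "settled F x \<longleftrightarrow>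
     (x \<noteq> v0 \<and> ((x, Circ) \<in> Vs \<or> (x, Chg \<sigma>) \<in> Vs) \<longrightarrow> (\<exists>y. (x, y, \<sigma>) \<in> F)) \<and>
     (\<forall>s\<in>{1..<\<sigma>}. (x, Chg s) \<in> Vs \<longrightarrow> (\<exists>y. (y, x, s) \<in> F)) \<and>
     ((x, Star) \<in> Vs \<longrightarrow> (\<exists>y. \<exists>s\<in>{1..<\<sigma>}. (y, x, s) \<in> F))"

definition loose_at :: "('v \<times> 'v \<times> nat) set \<Rightarrow> 'v \<Rightarrow> nat \<Rightarrow> bool" where
  "loose_at F x s \<longleftrightarrow>
     ((x, Circ) \<in> Vs \<or> (x, Chg s) \<in> Vs) \<and> s \<in> {1..<\<sigma>} \<and> (\<forall>y. (x, y, s) \<notin> F) \<or>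
     ((x, Star) \<in> Vs \<or> (x, Chg \<sigma>) \<in> Vs) \<and> s = \<sigma> \<and> (\<forall>y. (y, x, \<sigma>) \<notin> F)"

lemma settled_mono: "settled F x \<Longrightarrow> F \<subseteq> F' \<Longrightarrow> settled F' x"
  unfolding settled_def by blast

lemma loose_at_edge_exists:
  assumes "Es \<noteq> {}" "loose_at F x s"
  shows "\<exists>y. tying_edge \<sigma> s x y \<in> Es - F"
proof (cases "s < \<sigma>")
  case True
  then have "(x, Circ) \<in> Vs \<or> (x, Chg s) \<in> Vs" "s \<in> {1..<\<sigma>}" "\<forall>y. (x, y, s) \<notin> F"
    using assms(2) unfolding loose_at_def by auto
  then show ?thesis
    using Circ_out_edge_exists[OF assms(1), of x s] Chg_out_edge_exists[of x s] True
    unfolding tying_edge_def by auto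
next
  case False
  then have "(x, Star) \<in> Vs \<or> (x, Chg \<sigma>) \<in> Vs" "s = \<sigma>" "\<forall>y. (y, x, \<sigma>) \<notin> F"
    using assms(2) unfolding loose_at_def by auto
  then show ?thesis
    using Star_in_edge_exists[OF assms(1), of x \<sigma>] Chg_in_edge_exists[of x \<sigma>] two_le_charges
    unfolding tying_edge_def by auto
qed

text \<open>The type of the new edge fixes the vertex type of its far end.\<close>
lemma settled_tying_endpoint:
  assumes e: "tying_edge \<sigma> s x y \<in> Es"
  shows "settled {tying_edge \<sigma> s x y} y"
proof (cases "s < \<sigma>")
  case True
  then have e': "(x, y, s) \<in> Es" using e unfolding tying_edge_def by simp
  then have "s \<in> {1..<\<sigma>}" using edge_range True by auto
  then show ?thesis
    using True Circ_no_in_edge[of y x s] Chg_in_edge_charge[of y _ x s] e'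
    unfolding settled_def tying_edge_def by auto
next
  case False
  then have e': "(y, x, \<sigma>) \<in> Es" using e unfolding tying_edge_def by simp
  then show ?thesis
    using False Star_no_out_edge[of y x \<sigma>] Chg_out_edge_charge[of y _ x \<sigma>]
    unfolding settled_def tying_edge_def by auto
qed

end

section \<open>Explored parts without loose ends\<close>

locale saturated_subgraph = rooted_toom_graph \<sigma> V v0 Vs Es
  for \<sigma> V and v0 :: 'v and Vs Es +
  fixes U :: "'v set" and F :: "('v \<times> 'v \<times> nat) set"
  assumes root_in_U: "v0 \<in> U" and U_subset: "U \<subseteq> V" and F_subset: "F \<subseteq> Es"
    and F_inside: "(x, y, b) \<in> F \<Longrightarrow> x \<in> U \<and> y \<in> U"
    and settled: "x \<in> U \<Longrightarrow> settled F x"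
    and not_loose: "x \<in> U \<Longrightarrow> \<not> loose_at F x s"
begin

definition sources :: "'v set" where "sources = {x \<in> U. (x, Circ) \<in> Vs}"
definition sinks :: "'v set" where "sinks = {x \<in> U. (x, Star) \<in> Vs}"
definition charged :: "nat \<Rightarrow> 'v set" where "charged b = {x \<in> U. (x, Chg b) \<in> Vs}"
definition charge_rel :: "nat \<Rightarrow> ('v \<times> 'v) set" where "charge_rel b = {(x, y). (x, y, b) \<in> F}"

lemma finite_sources: "finite sources" and finite_sinks: "finite sinks"
  using U_subset finite_V unfolding sources_def sinks_def by (auto intro: finite_subset)

lemma sources_charged_disjoint: "sources \<inter> charged b = {}"
  and sinks_charged_disjoint: "sinks \<inter> charged b = {}"
  unfolding sources_def sinks_def charged_def using vertex_type_unique by blast+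

lemma F_source_type: "(x, y, b) \<in> F \<Longrightarrow> x \<in> sources \<union> charged b"
proof -
  assume e: "(x, y, b) \<in> F"
  then have "(x, y, b) \<in> Es" "x \<in> U" using F_subset F_inside by auto
  moreover obtain a where "(x, a) \<in> Vs" using calculation(1) edge_range vertex_has_type by blast
  ultimately show ?thesis
    using edge_source_type unfolding sources_def charged_def by blast
qed

lemma F_target_type: "(x, y, b) \<in> F \<Longrightarrow> y \<in> sinks \<union> charged b"
proof -
  assume e: "(x, y, b) \<in> F"
  then have "(x, y, b) \<in> Es" "y \<in> U" using F_subset F_inside by auto
  moreover obtain a where "(y, a) \<in> Vs" using calculation(1) edge_range vertex_has_type by blast
  ultimately show ?thesis
    using edge_target_type unfolding sinks_def charged_def by blast
qed

lemma card_charge_balance: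
  assumes "Domain (charge_rel b) = A \<union> charged b" "Range (charge_rel b) = B \<union> charged b"
    "A \<inter> charged b = {}" "B \<inter> charged b = {}"
  shows "card A = card B"
proof (rule card_Domain_Range_balance[OF _ _ _ assms])
  have "charge_rel b \<subseteq> (\<lambda>(x, y, c). (x, y)) ` F"
    unfolding charge_rel_def by force
  then show "finite (charge_rel b)"
    using finite_subset[OF F_subset finite_Es] by (meson finite_imageI finite_subset)
  show "\<And>x y y'. (x, y) \<in> charge_rel b \<Longrightarrow> (x, y') \<in> charge_rel b \<Longrightarrow> y = y'"
    using F_subset out_edge_unique unfolding charge_rel_def by blast
  show "\<And>x x' y. (x, y) \<in> charge_rel b \<Longrightarrow> (x', y) \<in> charge_rel b \<Longrightarrow> x = x'"
    using F_subset in_edge_unique unfolding charge_rel_def by blast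
qed

lemma card_sources_eq:
  assumes "b \<in> {1..<\<sigma>}"
  shows "card sources = card (sinks \<inter> Range (charge_rel b))"
proof (rule card_charge_balance)
  show "Domain (charge_rel b) = sources \<union> charged b"
  proof
    show "Domain (charge_rel b) \<subseteq> sources \<union> charged b"
      using F_source_type unfolding charge_rel_def by blast
    show "sources \<union> charged b \<subseteq> Domain (charge_rel b)"
      using not_loose assms unfolding loose_at_def charge_rel_def sources_def charged_def by blast
  qed
  show "Range (charge_rel b) = sinks \<inter> Range (charge_rel b) \<union> charged b"
  proof
    show "Range (charge_rel b) \<subseteq> sinks \<inter> Range (charge_rel b) \<union> charged b"
      using F_target_type unfolding charge_rel_def by blast
    show "sinks \<inter> Range (charge_rel b) \<union> charged b \<subseteq> Range (charge_rel b)"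
      using settled assms unfolding settled_def charge_rel_def charged_def by blast
  qed
qed (use sources_charged_disjoint sinks_charged_disjoint in blast)+

lemma card_sinks_eq: "card (sources \<inter> Domain (charge_rel \<sigma>)) = card sinks"
proof (rule card_charge_balance)
  have "x \<noteq> v0" if "x \<in> charged \<sigma>" for x
    using that root_type vertex_type_unique unfolding charged_def by blast
  then have "charged \<sigma> \<subseteq> Domain (charge_rel \<sigma>)"
    using settled unfolding charged_def settled_def charge_rel_def by blast
  then show "Domain (charge_rel \<sigma>) = sources \<inter> Domain (charge_rel \<sigma>) \<union> charged \<sigma>"
    using F_source_type unfolding charge_rel_def by blast
  show "Range (charge_rel \<sigma>) = sinks \<union> charged \<sigma>"
  proof
    show "Range (charge_rel \<sigma>) \<subseteq> sinks \<union> charged \<sigma>"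
      using F_target_type unfolding charge_rel_def by blast
    show "sinks \<union> charged \<sigma> \<subseteq> Range (charge_rel \<sigma>)"
      using not_loose unfolding loose_at_def charge_rel_def sinks_def charged_def by blast
  qed
qed (use sources_charged_disjoint sinks_charged_disjoint in blast)+

text \<open>Charge \<open>1\<close> matches every source with a distinct sink and charge \<open>\<sigma>\<close> every sink with a
  distinct source; hence both matchings are perfect.\<close>
lemma sources_have_top_edges: "sources \<subseteq> Domain (charge_rel \<sigma>)"
  and sinks_have_low_edges: "b \<in> {1..<\<sigma>} \<Longrightarrow> sinks \<subseteq> Range (charge_rel b)"
proof -
  have one: "1 \<in> {1..<\<sigma>}" using two_le_charges by simp
  have "card sources \<le> card sinks"
    using card_sources_eq[OF one] finite_sinks by (simp add: card_mono)
  moreover have "card sinks \<le> card sources"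
    using card_sinks_eq finite_sources by (metis card_mono inf_le1)
  ultimately show "sources \<subseteq> Domain (charge_rel \<sigma>)"
    using card_sinks_eq finite_sources by (metis card_subset_eq inf_le1 le_antisym le_iff_inf)
  show "sinks \<subseteq> Range (charge_rel b)" if "b \<in> {1..<\<sigma>}"
    using card_sources_eq[OF that] \<open>card sinks \<le> card sources\<close> finite_sinks
    by (metis card_mono card_subset_eq inf_le1 le_antisym le_iff_inf)
qed

lemma out_edge_found:
  assumes e: "(x, y, b) \<in> Es" and "x \<in> U"
  shows "(x, y, b) \<in> F"
proof -
  obtain a where a: "(x, a) \<in> Vs" using e edge_range vertex_has_type by blast
  have b: "b \<in> {1..\<sigma>}" using edge_range[OF e] by blast
  have "\<exists>y'. (x, y', b) \<in> F"
  proof (cases "b < \<sigma>")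
    case True
    then show ?thesis
      using not_loose[OF \<open>x \<in> U\<close>, of b] edge_source_type[OF e a] a b unfolding loose_at_def by auto
  next
    case False
    then have "b = \<sigma>" using b by simp
    moreover have "x \<noteq> v0" if "a = Chg \<sigma>"
      using that a root_type vertex_type_unique by blast
    ultimately show ?thesis
      using edge_source_type[OF e a] a settled[OF \<open>x \<in> U\<close>] sources_have_top_edges \<open>x \<in> U\<close>
      unfolding settled_def sources_def charge_rel_def by blast
  qed
  then show ?thesis
    using F_subset out_edge_unique[OF e] by blast
qed

lemma in_edge_found:
  assumes e: "(x, y, b) \<in> Es" and "y \<in> U"
  shows "(x, y, b) \<in> F"
proof -
  obtain a where a: "(y, a) \<in> Vs" using e edge_range vertex_has_type by blast
  have b: "b \<in> {1..\<sigma>}" using edge_range[OF e] by blast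
  have "\<exists>x'. (x', y, b) \<in> F"
  proof (cases "b < \<sigma>")
    case True
    then have "b \<in> {1..<\<sigma>}" using b by simp
    then show ?thesis
      using edge_target_type[OF e a] a settled[OF \<open>y \<in> U\<close>] sinks_have_low_edges \<open>y \<in> U\<close>
      unfolding settled_def sinks_def charge_rel_def by blast
  next
    case False
    then have "b = \<sigma>" using b by simp
    then show ?thesis
      using not_loose[OF \<open>y \<in> U\<close>, of \<sigma>] edge_target_type[OF e a] a unfolding loose_at_def by auto
  qed
  then show ?thesis
    using F_subset in_edge_unique[OF e] by blast
qed

lemma all_edges_found: "F = Es"
proof -
  have "V \<subseteq> U"
  proof (rule graph_connected_closed_subset[OF connected root_in_V root_in_U])
    fix x y assume "(x, y) \<in> adjacent Es" "x \<in> U"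
    then show "y \<in> U"
      using out_edge_found in_edge_found F_inside unfolding adjacent_iff by blast
  qed
  then show ?thesis
    using F_subset out_edge_found edge_range by fast
qed

end

section \<open>Exploring a Toom graph\<close>

context rooted_toom_graph
begin

text \<open>\<open>L\<close> lists the vertices found so far in the order of their labels, \<open>F\<close> holds the edges
  found so far.\<close>
definition partial_enumeration :: "'v list \<Rightarrow> ('v \<times> 'v \<times> nat) set \<Rightarrow> bool" where
  "partial_enumeration L F \<longleftrightarrow>
     distinct L \<and> L \<noteq> [] \<and> L ! 0 = v0 \<and> set L \<subseteq> V \<and> F \<subseteq> Es \<and>
     F \<subseteq> set L \<times> set L \<times> UNIV \<and>
     graph_connected {..<length L} (index_edges L F) \<and> (\<forall>x\<in>set L. settled F x)"

definition index_graph :: "'v list \<Rightarrow> ('v \<times> 'v \<times> nat) set \<Rightarrow> (nat \<times> vty) set \<times> (nat \<times> nat \<times> nat) set" where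
  "index_graph L F = (index_types Vs L, index_edges L F)"

lemma partial_enumerationD:
  assumes "partial_enumeration L F"
  shows "distinct L" "L \<noteq> []" "L ! 0 = v0" "set L \<subseteq> V" "F \<subseteq> Es"
    "F \<subseteq> set L \<times> set L \<times> UNIV"
    "graph_connected {..<length L} (index_edges L F)" "\<And>x. x \<in> set L \<Longrightarrow> settled F x"
  using assms unfolding partial_enumeration_def by blast+

lemma partial_enumeration_start: "partial_enumeration [v0] {}"
  using root_in_V root_type vertex_type_unique
  unfolding partial_enumeration_def settled_def graph_connected_iff_adjacent by auto

lemma index_graph_start: "index_graph [v0] {} = trivial_incomplete_toom"
  using root_type vertex_type_unique
  unfolding index_graph_def trivial_incomplete_toom_def index_edges_def by auto

lemma card_Eout_subgraph_le_1: "F \<subseteq> Es \<Longrightarrow> card (Eout F b x) \<le> 1"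
  using card_Eout_le_1[of b x] card_mono[OF finite_subset[OF _ finite_Es], of "Eout Es b x" "Eout F b x"]
  unfolding Eout_def by fastforce

lemma card_Ein_subgraph_le_1: "F \<subseteq> Es \<Longrightarrow> card (Ein F b x) \<le> 1"
  using card_Ein_le_1[of b x] card_mono[OF finite_subset[OF _ finite_Es], of "Ein Es b x" "Ein F b x"]
  unfolding Ein_def by fastforce

lemma card_Eout_subgraph_eq_1: "F \<subseteq> Es \<Longrightarrow> (x, y, b) \<in> F \<Longrightarrow> card (Eout F b x) = 1"
  using card_Eout_subgraph_le_1[of F b x] finite_subset[OF _ finite_Es, of "Eout F b x"]
  by (fastforce simp: Eout_def le_Suc_eq card_0_eq)

lemma card_Ein_subgraph_eq_1: "F \<subseteq> Es \<Longrightarrow> (y, x, b) \<in> F \<Longrightarrow> card (Ein F b x) = 1"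
  using card_Ein_subgraph_le_1[of F b x] finite_subset[OF _ finite_Es, of "Ein F b x"]
  by (fastforce simp: Ein_def le_Suc_eq card_0_eq)

context
  fixes L F assumes pe: "partial_enumeration L F"
begin

lemma card_Eout_index_edges:
  assumes "i < length L" shows "card (Eout (index_edges L F) b i) = card (Eout F b (L ! i))"
proof (rule bij_betw_same_card)
  show "bij_betw (\<lambda>(i, j, c). (L ! i, L ! j, c)) (Eout (index_edges L F) b i) (Eout F b (L ! i))"
    by (rule bij_betw_Eout_index_edges) (use partial_enumerationD[OF pe] assms in auto)
qed

lemma card_Ein_index_edges:
  assumes "i < length L" shows "card (Ein (index_edges L F) b i) = card (Ein F b (L ! i))"
proof (rule bij_betw_same_card)
  show "bij_betw (\<lambda>(j, i, c). (L ! j, L ! i, c)) (Ein (index_edges L F) b i) (Ein F b (L ! i))"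
    by (rule bij_betw_Ein_index_edges) (use partial_enumerationD[OF pe] assms in auto)
qed

lemma card_Eout_index_edges_le_1: "i < length L \<Longrightarrow> card (Eout (index_edges L F) b i) \<le> 1"
  and card_Ein_index_edges_le_1: "i < length L \<Longrightarrow> card (Ein (index_edges L F) b i) \<le> 1"
  using card_Eout_index_edges card_Ein_index_edges partial_enumerationD(5)[OF pe]
    card_Eout_subgraph_le_1 card_Ein_subgraph_le_1 by simp_all

lemma card_Eout_index_edges_eq_1: "i < length L \<Longrightarrow> (L ! i, y, b) \<in> F \<Longrightarrow> card (Eout (index_edges L F) b i) = 1"
  and card_Ein_index_edges_eq_1: "i < length L \<Longrightarrow> (y, L ! i, b) \<in> F \<Longrightarrow> card (Ein (index_edges L F) b i) = 1"
  using card_Eout_index_edges card_Ein_index_edges partial_enumerationD(5)[OF pe]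
    card_Eout_subgraph_eq_1 card_Ein_subgraph_eq_1 by simp_all

lemma Eout_index_edges_empty_iff:
  "i < length L \<Longrightarrow> Eout (index_edges L F) b i = {} \<longleftrightarrow> (\<forall>y. (L ! i, y, b) \<notin> F)"
  using partial_enumerationD(6)[OF pe] by (fastforce simp: Eout_def in_set_conv_nth subset_iff)

lemma Ein_index_edges_empty_iff:
  "i < length L \<Longrightarrow> Ein (index_edges L F) b i = {} \<longleftrightarrow> (\<forall>y. (y, L ! i, b) \<notin> F)"
  using partial_enumerationD(6)[OF pe] by (fastforce simp: Ein_def in_set_conv_nth subset_iff)

lemma labels_eq_lessThan_length: "{0..length L - 1} = {..<length L}"
  using partial_enumerationD(2)[OF pe] by (cases L) (auto simp: lessThan_Suc_atMost atLeast0AtMost)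

lemma index_typed_digraph:
  "typed_digraph {..<length L} (vtypes \<sigma>) {1..\<sigma>} (index_types Vs L) (index_edges L F)"
proof -
  have "\<exists>a. (L ! i, a) \<in> Vs" if "i < length L" for i
    using that partial_enumerationD(4)[OF pe] vertex_has_type nth_mem by blast
  then show ?thesis
    unfolding typed_digraph_def
    using type_range edge_range partial_enumerationD(5)[OF pe] by auto
qed

lemma partial_enumeration_incomplete_toom: "incomplete_toom \<sigma> (index_types Vs L) (index_edges L F)"
  unfolding incomplete_toom_def
proof (intro conjI disjI2)
  let ?T = "index_types Vs L" and ?E = "index_edges L F"
  have F: "F \<subseteq> Es" using partial_enumerationD(5)[OF pe] .
  have settled: "settled F (L ! i)" if "i < length L" for i
    using that partial_enumerationD(8)[OF pe] nth_mem by blast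
  have not_root: "L ! i \<noteq> v0" if "i < length L" "i \<noteq> 0" for i
    using that partial_enumerationD(1-3)[OF pe] nth_eq_iff_index_eq by fastforce
  show "\<exists>N. typed_digraph {0..N} (vtypes \<sigma>) {1..\<sigma>} ?T ?E \<and> graph_connected {0..N} ?E"
    using index_typed_digraph partial_enumerationD(7)[OF pe] unfolding labels_eq_lessThan_length[symmetric] by blast
  show "(0, Circ) \<in> ?T"
    using partial_enumerationD(2,3)[OF pe] root_type by simp
  show "\<forall>v\<in>Vty ?T Circ. (\<forall>s\<in>{1..\<sigma>}. Ein ?E s v = {}) \<and> (\<forall>s\<in>{1..\<sigma>}. card (Eout ?E s v) \<le> 1)"
    using Ein_index_edges_empty_iff Circ_no_in_edge F card_Eout_index_edges_le_1 by auto
  show "\<forall>v\<in>Vty ?T Star. (\<forall>s\<in>{1..\<sigma>}. Eout ?E s v = {}) \<and> (\<forall>s\<in>{1..\<sigma>}. card (Ein ?E s v) \<le> 1)"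
    using Eout_index_edges_empty_iff Star_no_out_edge F card_Ein_index_edges_le_1 by auto
  show "\<forall>s\<in>{1..\<sigma>}. \<forall>v\<in>Vty ?T (Chg s). card (Ein ?E s v) \<le> 1 \<and> card (Eout ?E s v) \<le> 1 \<and>
      (\<forall>t\<in>{1..\<sigma>}. t \<noteq> s \<longrightarrow> Ein ?E t v = {} \<and> Eout ?E t v = {})"
  proof (intro ballI conjI)
    fix s v assume "v \<in> Vty ?T (Chg s)"
    then have v: "v < length L" and c: "(L ! v, Chg s) \<in> Vs" by auto
    show "card (Ein ?E s v) \<le> 1" "card (Eout ?E s v) \<le> 1"
      using card_Ein_index_edges_le_1 card_Eout_index_edges_le_1 v by auto
    show "t \<noteq> s \<longrightarrow> Ein ?E t v = {} \<and> Eout ?E t v = {}" for t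
      using Ein_index_edges_empty_iff[OF v] Eout_index_edges_empty_iff[OF v]
        Chg_in_edge_charge[OF c] Chg_out_edge_charge[OF c] F by blast
  qed
  show "\<forall>v\<in>Vty ?T (Chg \<sigma>) \<union> Vty ?T Circ - {0}. card (Eout ?E \<sigma> v) = 1"
    using settled not_root card_Eout_index_edges_eq_1 unfolding settled_def by fastforce
  show "\<forall>s\<in>{1..<\<sigma>}. \<forall>v\<in>Vty ?T (Chg s). card (Ein ?E s v) = 1"
    using settled card_Ein_index_edges_eq_1 unfolding settled_def by fastforce
  show "\<forall>v\<in>Vty ?T Star. \<exists>s\<in>{1..<\<sigma>}. Ein ?E s v \<noteq> {}"
    using settled Ein_index_edges_empty_iff unfolding settled_def by fastforce
qed

end

context
  fixes L F assumes pe: "partial_enumeration L F"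
begin

lemma loose_end_index_iff:
  "loose_end \<sigma> (index_types Vs L) (index_edges L F) (v, s) \<longleftrightarrow> v < length L \<and> loose_at F (L ! v) s"
  using Eout_index_edges_empty_iff[OF pe, of v s] Ein_index_edges_empty_iff[OF pe, of v \<sigma>]
  unfolding loose_end_def loose_at_def by auto

lemma loose_end_exists:
  assumes "F \<noteq> Es"
  shows "\<exists>le. loose_end \<sigma> (index_types Vs L) (index_edges L F) le"
proof (rule ccontr)
  assume none: "\<nexists>le. loose_end \<sigma> (index_types Vs L) (index_edges L F) le"
  interpret saturated_subgraph \<sigma> V v0 Vs Es "set L" F
  proof
    show "\<not> loose_at F x s" if "x \<in> set L" for x s
      using that none loose_end_index_iff by (metis in_set_conv_nth)
  qed (use partial_enumerationD[OF pe] in \<open>auto intro: nth_mem\<close>)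
  show False using all_edges_found assms by blast
qed

lemma partial_enumeration_append_new:
  assumes "v < length L" and e: "tying_edge \<sigma> s (L ! v) y \<in> Es"
    and settled_y: "settled (insert (tying_edge \<sigma> s (L ! v) y) F) y"
  shows "partial_enumeration (append_new L y) (insert (tying_edge \<sigma> s (L ! v) y) F)"
proof -
  let ?e = "tying_edge \<sigma> s (L ! v) y" and ?L = "append_new L y"
  note pe' = partial_enumerationD[OF pe]
  obtain j where "{..<length ?L} = insert j {..<length L}"
    and E: "index_edges ?L (insert ?e F) = insert (tying_edge \<sigma> s v j) (index_edges L F)"
    using index_edges_append_new[OF pe'(1) assms(1) pe'(6), of y \<sigma> s] by blast
  moreover have "(v, j) \<in> adjacent (insert (tying_edge \<sigma> s v j) (index_edges L F))"
    unfolding adjacent_iff tying_edge_def by auto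
  ultimately have "graph_connected {..<length ?L} (index_edges ?L (insert ?e F))"
    using graph_connected_insert[OF pe'(7) subset_insertI] assms(1) by simp
  moreover have "?L ! 0 = v0"
    using append_new_prefix[of L y] pe'(2,3) by (metis length_greater_0_conv nth_append)
  moreover have "y \<in> V"
    using e edge_range unfolding tying_edge_def by (auto split: if_splits)
  moreover have "settled (insert ?e F) x" if "x \<in> set L" for x
    using settled_mono[OF pe'(8)[OF that]] by blast
  ultimately show ?thesis
    using pe' e settled_y assms(1)
    unfolding partial_enumeration_def set_append_new tying_edge_def
    by (auto simp: distinct_append_new append_new_def)
qed

lemma extension_step:
  assumes "F \<noteq> Es" "loose_end \<sigma> (index_types Vs L) (index_edges L F) (v, s)"
  shows "\<exists>L' F'. partial_enumeration L' F' \<and> card F' = Suc (card F) \<and>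
    extension_at \<sigma> (index_graph L F) (v, s) (index_graph L' F')"
proof -
  note pe' = partial_enumerationD[OF pe]
  have v: "v < length L" and loose: "loose_at F (L ! v) s"
    using assms(2) loose_end_index_iff by auto
  have "Es \<noteq> {}" using assms(1) pe'(5) by blast
  then obtain y where e: "tying_edge \<sigma> s (L ! v) y \<in> Es" "tying_edge \<sigma> s (L ! v) y \<notin> F"
    using loose_at_edge_exists[OF _ loose] by blast
  let ?e = "tying_edge \<sigma> s (L ! v) y" and ?L = "append_new L y"
  have pe_new: "partial_enumeration ?L (insert ?e F)"
    using partial_enumeration_append_new[OF v e(1)] settled_tying_endpoint[OF e(1)]
      settled_mono by blast
  obtain j where j: "j < length ?L" "?L ! j = y"
    and E: "index_edges ?L (insert ?e F) = insert (tying_edge \<sigma> s v j) (index_edges L F)"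
    using index_edges_append_new[OF pe'(1) v pe'(6), of y \<sigma> s] by blast
  have "tying_edge \<sigma> s v j \<notin> index_edges L F"
  proof
    assume "tying_edge \<sigma> s v j \<in> index_edges L F"
    then have "j < length L" unfolding tying_edge_def by (auto split: if_splits)
    then have "L ! j = y" using j append_new_prefix[of L y] by (metis nth_append)
    with \<open>tying_edge \<sigma> s v j \<in> index_edges L F\<close> e(2) show False
      unfolding tying_edge_def by (auto split: if_splits)
  qed
  with E have "index_edges ?L (insert ?e F) - index_edges L F = {tying_edge \<sigma> s v j}"
    by auto
  moreover have "index_types Vs L \<subseteq> index_types Vs ?L"
    using append_new_prefix[of L y] index_types_append by metis
  moreover have "card (insert ?e F) = Suc (card F)"
    using e(2) finite_subset[OF pe'(5) finite_Es] by simp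
  ultimately show ?thesis
    using pe_new partial_enumeration_incomplete_toom[OF pe_new] E
    unfolding index_graph_def extension_at_iff by blast
qed

lemma most_urgent_extension_step:
  assumes "F \<noteq> Es"
  shows "\<exists>L' F'. partial_enumeration L' F' \<and> card F' = Suc (card F) \<and>
    (\<exists>le. most_urgent_loose_end \<sigma> (index_types Vs L) (index_edges L F) le \<and>
       extension_at \<sigma> (index_graph L F) le (index_graph L' F'))"
proof -
  obtain le where mu: "most_urgent_loose_end \<sigma> (index_types Vs L) (index_edges L F) le"
    using loose_end_exists[OF assms] most_urgent_loose_end_exists by blast
  moreover obtain v s where "le = (v, s)" by fastforce
  ultimately show ?thesis
    using extension_step[OF assms] unfolding most_urgent_loose_end_def by blast
qed

end

lemma partial_enumeration_covers:
  assumes "partial_enumeration L Es"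
  shows "set L = V"
proof -
  note pe' = partial_enumerationD[OF assms]
  have "V \<subseteq> set L"
  proof (rule graph_connected_closed_subset[OF connected root_in_V])
    show "v0 \<in> set L" using pe'(2,3) by (metis length_greater_0_conv nth_mem)
    show "y \<in> set L" if "(x, y) \<in> adjacent Es" "x \<in> set L" for x y
      using that pe'(6) unfolding adjacent_iff by blast
  qed
  then show ?thesis using pe'(4) by blast
qed

lemma enumeration_run_exists:
  obtains Ls Fs where "Ls 0 = [v0]" "Fs 0 = {}"
    "\<And>e. e \<le> card Es \<Longrightarrow> partial_enumeration (Ls e) (Fs e) \<and> card (Fs e) = e"
    "\<And>e. e < card Es \<Longrightarrow> \<exists>le. most_urgent_loose_end \<sigma> (index_types Vs (Ls e)) (index_edges (Ls e) (Fs e)) le \<and>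
        extension_at \<sigma> (index_graph (Ls e) (Fs e)) le (index_graph (Ls (Suc e)) (Fs (Suc e)))"
proof -
  define P where "P n st \<longleftrightarrow> (n = 0 \<longrightarrow> st = ([v0], {})) \<and>
    (n \<le> card Es \<longrightarrow> partial_enumeration (fst st) (snd st) \<and> card (snd st) = n)" for n st
  define Q where "Q n st st' \<longleftrightarrow> (n < card Es \<longrightarrow>
    (\<exists>le. most_urgent_loose_end \<sigma> (index_types Vs (fst st)) (index_edges (fst st) (snd st)) le \<and>
       extension_at \<sigma> (index_graph (fst st) (snd st)) le (index_graph (fst st') (snd st'))))" for n st st'
  have "\<exists>st. \<forall>n. P n (st n) \<and> Q n (st n) (st (Suc n))"
  proof (rule dependent_nat_choice)
    show "\<exists>st. P 0 st"
      using partial_enumeration_start unfolding P_def by auto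
  next
    fix st n assume P: "P n st"
    show "\<exists>st'. P (Suc n) st' \<and> Q n st st'"
    proof (cases "n < card Es")
      case True
      obtain L F where st: "st = (L, F)" by fastforce
      with P True have pe: "partial_enumeration L F" and "card F = n"
        unfolding P_def by auto
      with True obtain L' F' where "partial_enumeration L' F'" "card F' = Suc n"
        "\<exists>le. most_urgent_loose_end \<sigma> (index_types Vs L) (index_edges L F) le \<and>
           extension_at \<sigma> (index_graph L F) le (index_graph L' F')"
        using most_urgent_extension_step[OF pe] by force
      then show ?thesis
        using st unfolding P_def Q_def by (intro exI[of _ "(L', F')"]) auto
    next
      case False
      then show ?thesis
        using P unfolding P_def Q_def by (intro exI[of _ st]) auto
    qed
  qed
  then obtain st where "\<And>n. P n (st n) \<and> Q n (st n) (st (Suc n))" by blast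
  then show thesis
    by (intro that[of "fst \<circ> st" "snd \<circ> st"]) (auto simp: P_def Q_def)
qed

definition enumeration ::
  "('v \<Rightarrow> nat) \<Rightarrow> (nat \<Rightarrow> (nat \<times> vty) set \<times> (nat \<times> nat \<times> nat) set) \<Rightarrow> bool" where
  "enumeration \<eta> G \<longleftrightarrow>
     (\<forall>e\<le>card Es. incomplete_toom \<sigma> (fst (G e)) (snd (G e))) \<and>
     \<eta> v0 = 0 \<and>
     G 0 = trivial_incomplete_toom \<and>
     relabel (inv_into V \<eta>) (G (card Es)) = (Vs, Es) \<and>
     (\<forall>e. 0 < e \<and> e \<le> card Es \<longrightarrow>
        (\<exists>le. most_urgent_loose_end \<sigma> (fst (G (e - 1))) (snd (G (e - 1))) le \<and>
              extension_at \<sigma> (G (e - 1)) le (G e)))"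

lemma labels_eq_lessThan_card: "{0..card V - 1} = {..<card V}"
  using root_in_V finite_V by (cases "card V") (auto simp: card_gt_0_iff)

lemma final_labelling:
  assumes pe: "partial_enumeration L Es"
  shows "\<exists>\<eta>. bij_betw \<eta> V {0..card V - 1} \<and> \<eta> v0 = 0 \<and>
    relabel (inv_into V \<eta>) (index_graph L Es) = (Vs, Es)"
proof -
  have bij_nth: "bij_betw ((!) L) {..<length L} V"
    using partial_enumeration_covers[OF pe] partial_enumerationD(1)[OF pe] by (intro bij_betw_nth) auto
  then have len: "length L = card V"
    using bij_betw_same_card by fastforce
  define \<eta> where "\<eta> = inv_into {..<length L} ((!) L)"
  have "bij_betw \<eta> V {0..card V - 1}"
    using bij_betw_inv_into[OF bij_nth] labels_eq_lessThan_card len unfolding \<eta>_def by simp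
  moreover have "\<eta> v0 = 0"
    using partial_enumerationD(2,3)[OF pe] bij_betw_imp_inj_on[OF bij_nth] unfolding \<eta>_def
    by (metis inv_into_f_f length_greater_0_conv lessThan_iff)
  moreover have "relabel (inv_into V \<eta>) (index_graph L Es) = (Vs, Es)"
    unfolding index_graph_def
  proof (rule relabel_index_graph)
    show "inv_into V \<eta> i = L ! i" if "i < length L" for i
      unfolding \<eta>_def using inv_into_inv_into_eq[OF bij_nth] that by simp
  qed (use partial_enumeration_covers[OF pe] type_range edge_range in auto)
  ultimately show ?thesis by blast
qed

lemma enumeration_exists: "\<exists>\<eta> G. bij_betw \<eta> V {0..card V - 1} \<and> enumeration \<eta> G"
proof -
  obtain Ls Fs where start: "Ls 0 = [v0]" "Fs 0 = {}"
    and run: "\<And>e. e \<le> card Es \<Longrightarrow> partial_enumeration (Ls e) (Fs e) \<and> card (Fs e) = e"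
    and steps: "\<And>e. e < card Es \<Longrightarrow> \<exists>le. most_urgent_loose_end \<sigma> (index_types Vs (Ls e)) (index_edges (Ls e) (Fs e)) le \<and>
        extension_at \<sigma> (index_graph (Ls e) (Fs e)) le (index_graph (Ls (Suc e)) (Fs (Suc e)))"
    using enumeration_run_exists by blast
  have "Fs (card Es) = Es"
    using run[of "card Es"] partial_enumerationD(5) card_subset_eq[OF finite_Es] by blast
  then obtain \<eta> where "bij_betw \<eta> V {0..card V - 1}" "\<eta> v0 = 0"
    "relabel (inv_into V \<eta>) (index_graph (Ls (card Es)) (Fs (card Es))) = (Vs, Es)"
    using final_labelling run[of "card Es"] by auto
  moreover have "incomplete_toom \<sigma> (index_types Vs (Ls e)) (index_edges (Ls e) (Fs e))" if "e \<le> card Es" for e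
    using partial_enumeration_incomplete_toom run[OF that] by blast
  moreover have "\<exists>le. most_urgent_loose_end \<sigma> (index_types Vs (Ls (e - 1))) (index_edges (Ls (e - 1)) (Fs (e - 1))) le \<and>
      extension_at \<sigma> (index_graph (Ls (e - 1)) (Fs (e - 1))) le (index_graph (Ls e) (Fs e))"
    if "0 < e" "e \<le> card Es" for e
    using steps[of "e - 1"] that by simp
  ultimately have "bij_betw \<eta> V {0..card V - 1} \<and> enumeration \<eta> (\<lambda>e. index_graph (Ls e) (Fs e))"
    unfolding enumeration_def using start index_graph_start by (auto simp: index_graph_def)
  then show ?thesis by blast
qed

section \<open>Uniqueness of the labelling\<close>

lemma bij_betw_inv_labels:
  "bij_betw \<eta> V {0..card V - 1} \<Longrightarrow> bij_betw (inv_into V \<eta>) {..<card V} V"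
  using bij_betw_inv_into labels_eq_lessThan_card by fastforce

context
  fixes \<eta> G assumes enum: "enumeration \<eta> G"
begin

lemma enumerationD:
  shows "\<And>e. e \<le> card Es \<Longrightarrow> incomplete_toom \<sigma> (fst (G e)) (snd (G e))"
    "G 0 = trivial_incomplete_toom" "relabel (inv_into V \<eta>) (G (card Es)) = (Vs, Es)"
  using enum unfolding enumeration_def by blast+

lemma enumeration_step:
  assumes "Suc e \<le> card Es"
  shows "\<exists>le. most_urgent_loose_end \<sigma> (fst (G e)) (snd (G e)) le \<and> extension_at \<sigma> (G e) le (G (Suc e))"
proof -
  have "\<forall>e. 0 < e \<and> e \<le> card Es \<longrightarrow>
      (\<exists>le. most_urgent_loose_end \<sigma> (fst (G (e - 1))) (snd (G (e - 1))) le \<and> extension_at \<sigma> (G (e - 1)) le (G e))"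
    using enum unfolding enumeration_def by blast
  from this[rule_format, of "Suc e"] assms show ?thesis by simp
qed

lemma enumeration_mono:
  assumes "e \<le> e'" "e' \<le> card Es"
  shows "fst (G e) \<subseteq> fst (G e') \<and> snd (G e) \<subseteq> snd (G e')"
  using assms
proof (induction e' rule: dec_induct)
  case (step n)
  then obtain le where "extension_at \<sigma> (G n) le (G (Suc n))"
    using enumeration_step[of n] by auto
  with step show ?case
    using extension_at_mono by fastforce
qed simp

lemma enumeration_edge_image:
  assumes "e \<le> card Es" "(x, y, b) \<in> snd (G e)"
  shows "(inv_into V \<eta> x, inv_into V \<eta> y, b) \<in> Es"
proof -
  have "(x, y, b) \<in> snd (G (card Es))"
    using enumeration_mono[OF assms(1) order_refl] assms(2) by blast
  then show ?thesis
    using enumerationD(3) unfolding relabel_def by force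
qed

lemma enumeration_type_iff:
  assumes "e \<le> card Es"
  shows "(u, a) \<in> fst (G e) \<longleftrightarrow> u \<in> Domain (fst (G e)) \<and> (inv_into V \<eta> u, a) \<in> Vs"
proof -
  have image: "(inv_into V \<eta> u, a) \<in> Vs" if "(u, a) \<in> fst (G e)" for u a
  proof -
    have "(u, a) \<in> fst (G (card Es))"
      using enumeration_mono[OF assms order_refl] that by blast
    then show ?thesis
      using enumerationD(3) unfolding relabel_def by force
  qed
  show ?thesis
  proof
    assume "u \<in> Domain (fst (G e)) \<and> (inv_into V \<eta> u, a) \<in> Vs"
    then obtain a' where "(u, a') \<in> fst (G e)" "(inv_into V \<eta> u, a) \<in> Vs" by blast
    with image show "(u, a) \<in> fst (G e)" using vertex_type_unique by blast
  qed (use image in blast)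
qed

lemma enumeration_covers: "V \<subseteq> inv_into V \<eta> ` Domain (fst (G (card Es)))"
proof
  fix x assume "x \<in> V"
  then obtain a where "(x, a) \<in> Vs" using vertex_has_type by blast
  then show "x \<in> inv_into V \<eta> ` Domain (fst (G (card Es)))"
    using enumerationD(3) unfolding relabel_def by force
qed

lemma enumeration_step_shape:
  assumes "Suc k \<le> card Es" "Domain (fst (G k)) = {0..N}"
  shows "\<exists>v s w. most_urgent_loose_end \<sigma> (fst (G k)) (snd (G k)) (v, s) \<and> v \<in> Domain (fst (G k)) \<and>
    w \<le> Suc N \<and> snd (G (Suc k)) = insert (tying_edge \<sigma> s v w) (snd (G k)) \<and>
    Domain (fst (G (Suc k))) = insert w (Domain (fst (G k))) \<and>
    tying_edge \<sigma> s (inv_into V \<eta> v) (inv_into V \<eta> w) \<in> Es"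
proof -
  obtain A B A' B' where AB: "G k = (A, B)" "G (Suc k) = (A', B')" by fastforce
  obtain v s where mu: "most_urgent_loose_end \<sigma> A B (v, s)" and ext: "extension_at \<sigma> (A, B) (v, s) (A', B')"
    using enumeration_step[OF assms(1)] AB by (metis fst_conv prod.collapse snd_conv)
  have "v \<in> Domain A"
    using mu unfolding most_urgent_loose_end_def loose_end_def Vty_def by auto
  moreover have "incomplete_toom \<sigma> A B"
    using enumerationD(1)[of k] assms(1) AB by simp
  ultimately obtain w where "w \<le> Suc N" and B': "B' = insert (tying_edge \<sigma> s v w) B"
    and "Domain A' = insert w (Domain A)"
    using extension_at_shape[OF _ _ ext] assms(2) AB by auto
  moreover have "tying_edge \<sigma> s (inv_into V \<eta> v) (inv_into V \<eta> w) \<in> Es"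
    using enumeration_edge_image[OF assms(1), of v w s] enumeration_edge_image[OF assms(1), of w v \<sigma>] AB B'
    unfolding tying_edge_def by (auto split: if_splits)
  ultimately show ?thesis
    using mu \<open>v \<in> Domain A\<close> AB by auto
qed

end

lemma enumeration_types_agree:
  assumes E: "enumeration \<eta> G" and E': "enumeration \<eta>' G'"
    and e: "e \<le> card Es" and dom: "Domain (fst (G e)) = Domain (fst (G' e))"
    and agree: "\<forall>u\<in>Domain (fst (G e)). inv_into V \<eta> u = inv_into V \<eta>' u"
  shows "fst (G e) = fst (G' e)"
proof (rule set_eqI)
  fix p :: "nat \<times> vty"
  obtain u a where p: "p = (u, a)" by fastforce
  show "p \<in> fst (G e) \<longleftrightarrow> p \<in> fst (G' e)"
    unfolding p enumeration_type_iff[OF E e] enumeration_type_iff[OF E' e]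
    using dom agree by (cases "u \<in> Domain (fst (G e))") simp_all
qed

lemma enumerations_agree_step:
  assumes B: "bij_betw \<eta> V {0..card V - 1}" and E: "enumeration \<eta> G"
    and B': "bij_betw \<eta>' V {0..card V - 1}" and E': "enumeration \<eta>' G'"
    and k: "Suc k \<le> card Es" and same: "G k = G' k" and dom: "Domain (fst (G k)) = {0..N}"
    and small: "Suc N < card V"
    and agree: "\<forall>u\<in>Domain (fst (G k)). inv_into V \<eta> u = inv_into V \<eta>' u"
  shows "G (Suc k) = G' (Suc k) \<and> Domain (fst (G (Suc k))) \<subseteq> {0..Suc N} \<and>
    (\<forall>u\<in>Domain (fst (G (Suc k))). inv_into V \<eta> u = inv_into V \<eta>' u)"
proof -
  let ?f = "inv_into V \<eta>" and ?f' = "inv_into V \<eta>'"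
  obtain v s w where mu: "most_urgent_loose_end \<sigma> (fst (G k)) (snd (G k)) (v, s)"
    and v: "v \<in> Domain (fst (G k))" and w: "w \<le> Suc N"
    and edges: "snd (G (Suc k)) = insert (tying_edge \<sigma> s v w) (snd (G k))"
    and D: "Domain (fst (G (Suc k))) = insert w (Domain (fst (G k)))"
    and img: "tying_edge \<sigma> s (?f v) (?f w) \<in> Es"
    using enumeration_step_shape[OF E k dom] by blast
  obtain v' s' w' where mu': "most_urgent_loose_end \<sigma> (fst (G k)) (snd (G k)) (v', s')"
    and w': "w' \<le> Suc N"
    and edges': "snd (G' (Suc k)) = insert (tying_edge \<sigma> s' v' w') (snd (G k))"
    and D': "Domain (fst (G' (Suc k))) = insert w' (Domain (fst (G k)))"
    and img': "tying_edge \<sigma> s' (?f' v') (?f' w') \<in> Es"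
    using enumeration_step_shape[OF E' k] dom same by metis
  have vs: "v' = v" "s' = s"
    using most_urgent_loose_end_unique[OF mu mu'] by simp_all
  have "?f w = ?f' w'"
    using tying_edge_unique[OF img] img' agree v vs by simp
  then have "w = w'"
    using new_label_unique[of ?f "card V" ?f' w w' N] bij_betw_inv_labels[OF B] bij_betw_inv_labels[OF B']
      w w' small agree dom by (simp add: bij_betw_def)
  have agree': "\<forall>u\<in>Domain (fst (G (Suc k))). ?f u = ?f' u"
    using agree \<open>?f w = ?f' w'\<close> D \<open>w = w'\<close> by simp
  have "fst (G (Suc k)) = fst (G' (Suc k))"
    using enumeration_types_agree[OF E E' k] D D' agree' \<open>w = w'\<close> by simp
  moreover have "snd (G (Suc k)) = snd (G' (Suc k))"
    using edges edges' vs \<open>w = w'\<close> by simp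
  ultimately show ?thesis
    using agree' D dom w by (auto intro: prod_eqI)
qed

text \<open>The sequences are compared only while some label is still unused; once every label is in use,
  the first disjunct already holds.\<close>
lemma enumerations_agree:
  assumes B: "bij_betw \<eta> V {0..card V - 1}" and E: "enumeration \<eta> G"
    and B': "bij_betw \<eta>' V {0..card V - 1}" and E': "enumeration \<eta>' G'"
    and "e \<le> card Es"
  shows "(\<forall>u<card V. inv_into V \<eta> u = inv_into V \<eta>' u) \<or>
    (G e = G' e \<and> Domain (fst (G e)) \<subseteq> {..<card V} \<and>
     (\<forall>u\<in>Domain (fst (G e)). inv_into V \<eta> u = inv_into V \<eta>' u))"
  using \<open>e \<le> card Es\<close>
proof (induction e)
  case 0
  have "Domain (fst (G 0)) = {0}"
    using enumerationD(2)[OF E] unfolding trivial_incomplete_toom_def by auto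
  moreover have "inv_into V \<eta> 0 = inv_into V \<eta>' 0"
    using bij_betw_inv_into_left[OF B root_in_V] bij_betw_inv_into_left[OF B' root_in_V] E E'
    unfolding enumeration_def by simp
  moreover have "0 < card V"
    using root_in_V finite_V card_gt_0_iff by blast
  ultimately show ?case
    using enumerationD(2)[OF E] enumerationD(2)[OF E'] by simp
next
  case (Suc k)
  obtain N where dom: "Domain (fst (G k)) = {0..N}"
    using incomplete_toom_interval[OF enumerationD(1)[OF E, of k]] Suc.prems by auto
  show ?case
  proof (cases "Suc N < card V")
    case True
    then show ?thesis
      using Suc enumerations_agree_step[OF B E B' E' Suc.prems _ dom True] by fastforce
  next
    case False
    then show ?thesis
      using Suc dom by fastforce
  qed
qed

lemma enumeration_unique:
  assumes B: "bij_betw \<eta> V {0..card V - 1}" and E: "enumeration \<eta> G"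
    and B': "bij_betw \<eta>' V {0..card V - 1}" and E': "enumeration \<eta>' G'"
  shows "\<forall>v\<in>V. \<eta>' v = \<eta> v"
proof -
  let ?f = "inv_into V \<eta>" and ?f' = "inv_into V \<eta>'" and ?D = "Domain (fst (G (card Es)))"
  have "\<forall>u<card V. ?f u = ?f' u"
    using enumerations_agree[OF B E B' E' order_refl]
  proof (elim disjE conjE)
    assume agree: "\<forall>u\<in>?D. ?f u = ?f' u" and "?D \<subseteq> {..<card V}"
    have "u \<in> ?D" if "u < card V" for u
    proof -
      have "?f u \<in> V"
        using that bij_betw_inv_labels[OF B] bij_betwE by blast
      then obtain d where "d \<in> ?D" "?f u = ?f d"
        using enumeration_covers[OF E] by blast
      moreover have "inj_on ?f {..<card V}"
        using bij_betw_inv_labels[OF B] bij_betw_imp_inj_on by blast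
      ultimately show ?thesis
        using that \<open>?D \<subseteq> {..<card V}\<close> by (metis inj_onD lessThan_iff subsetD)
    qed
    with agree show ?thesis by blast
  qed blast
  then show ?thesis
    using inv_into_eq_imp_eq_on[OF B' B] labels_eq_lessThan_card by simp
qed

end

theorem mainTheorem8:
  fixes \<sigma> :: nat and V :: "'v set" and v0 :: 'v
    and Vs :: "('v \<times> vty) set" and Es :: "('v \<times> 'v \<times> nat) set"
  assumes "\<sigma> \<ge> 2"
    and "finite V"
    and "toom_graph \<sigma> V Vs Es"
    and "v0 \<in> Vty Vs Circ"
    and "graph_connected V Es"
    and "\<not> trivial_toom Vs Es"
  shows "\<exists>\<eta>. (bij_betw \<eta> V {0..card V - 1} \<and>
            (\<exists>G :: nat \<Rightarrow> (nat \<times> vty) set \<times> (nat \<times> nat \<times> nat) set.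
               (\<forall>e\<le>card Es. incomplete_toom \<sigma> (fst (G e)) (snd (G e))) \<and>
               \<eta> v0 = 0 \<and>
               G 0 = trivial_incomplete_toom \<and>
               relabel (inv_into V \<eta>) (G (card Es)) = (Vs, Es) \<and>
               (\<forall>e. 0 < e \<and> e \<le> card Es \<longrightarrow>
                  (\<exists>le. most_urgent_loose_end \<sigma> (fst (G (e - 1))) (snd (G (e - 1))) le \<and>
                        extension_at \<sigma> (G (e - 1)) le (G e))))) \<and>
          (\<forall>\<eta>'. (bij_betw \<eta>' V {0..card V - 1} \<and>
            (\<exists>G :: nat \<Rightarrow> (nat \<times> vty) set \<times> (nat \<times> nat \<times> nat) set.
               (\<forall>e\<le>card Es. incomplete_toom \<sigma> (fst (G e)) (snd (G e))) \<and>
               \<eta>' v0 = 0 \<and>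
               G 0 = trivial_incomplete_toom \<and>
               relabel (inv_into V \<eta>') (G (card Es)) = (Vs, Es) \<and>
               (\<forall>e. 0 < e \<and> e \<le> card Es \<longrightarrow>
                  (\<exists>le. most_urgent_loose_end \<sigma> (fst (G (e - 1))) (snd (G (e - 1))) le \<and>
                        extension_at \<sigma> (G (e - 1)) le (G e)))))
           \<longrightarrow> (\<forall>v\<in>V. \<eta>' v = \<eta> v))"
proof -
  interpret rooted_toom_graph \<sigma> V v0 Vs Es
    using assms by unfold_locales
  have "\<exists>\<eta>. (bij_betw \<eta> V {0..card V - 1} \<and> (\<exists>G. enumeration \<eta> G)) \<and>
      (\<forall>\<eta>'. (bij_betw \<eta>' V {0..card V - 1} \<and> (\<exists>G. enumeration \<eta>' G)) \<longrightarrow> (\<forall>v\<in>V. \<eta>' v = \<eta> v))"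
    using enumeration_exists enumeration_unique by blast
  then show ?thesis
    unfolding enumeration_def .
qed

end
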